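(* Let $P,Q\in W^{(l)}\setminus\{0\}$. (1) If $w(P)$ and $w(Q)$ are not aligned, then $[P,Q]\neq0$ and $w([P,Q])=w(P)+w(Q)-(1,1)$. (2) If $\overline w(P)$ and $\overline w(Q)$ are not aligned, then $[P,Q]\ne0$ and $\overline w([P,Q])=\overline w(P)+\overline w(Q)-(1,1)$.
   Context: $K$ is a field of characteristic zero, $l\in\mathbb{N}$. $W^{(l)}$ is the associative $K$-algebra with $K$-basis $\{X^{i/l}Y^j:i\in\mathbb{Z},j\in\mathbb{N}_0\}$, powers of $X$ multiplying as Laurent monomials and $[Y,X^\alpha]=\alpha X^{\alpha-1}$ for $\alpha\in\frac1l\mathbb{Z}$. $\mathrm{Supp}(P)$ is the set of $(i/l,j)$ such that $X^{i/l}Y^j$ has nonzero coefficient in $P$. $w(P)$: among the points $(a,b)\in\mathrm{Supp}(P)$ maximizing $a-b$, the one with largest $a$; $\overline w(P)$: among the points maximizing $b-a$, the one with largest $b$. Two vectors $(a_1,a_2),(b_1,b_2)$ are aligned if $a_1b_2-a_2b_1=0$. *)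

theory Defs
  imports Complex_Main
begin

text \<open>Elements of W^(l) over a field K of characteristic zero are represented by their
coefficient functions: P (i,j) is the coefficient of the basis monomial X^(i/l) Y^j
(i an integer, j a natural number).\<close>

type_synonym 'k wl = "int \<times> nat \<Rightarrow> 'k"

definition wl_elem :: "'k::zero wl \<Rightarrow> bool" where
  "wl_elem P \<longleftrightarrow> finite {k. P k \<noteq> 0}"

definition wl_supp_idx :: "'k::zero wl \<Rightarrow> (int \<times> nat) set" where
  "wl_supp_idx P = {k. P k \<noteq> 0}"

definition ffact_wl :: "nat \<Rightarrow> int \<Rightarrow> nat \<Rightarrow> 'k::field_char_0" where
  "ffact_wl l i t = (\<Prod>s<t. (of_int i / of_nat l - of_nat s))"

text \<open>Normal-ordering rule: since Y acts as d/dX, we have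
  Y^j X^beta = sum_t (j choose t) beta(beta-1)...(beta-t+1) X^(beta-t) Y^(j-t).
  Hence (X^(i1/l) Y^j1)(X^(i2/l) Y^j2) =
  sum_{t=0}^{j1} (j1 choose t) ff(i2/l,t) X^((i1+i2-t l)/l) Y^(j1+j2-t).
  basis_mul l a b c is the coefficient of basis monomial c in the product a*b.\<close>
definition basis_mul :: "nat \<Rightarrow> int \<times> nat \<Rightarrow> int \<times> nat \<Rightarrow> int \<times> nat \<Rightarrow> 'k::field_char_0" where
  "basis_mul l a b c =
     (let (i1, j1) = a; (i2, j2) = b; (i, j) = c in
      if j \<le> j1 + j2 \<and> j1 + j2 - j \<le> j1
         \<and> i = i1 + i2 - int ((j1 + j2 - j) * l)
      then of_nat (j1 choose (j1 + j2 - j)) * ffact_wl l i2 (j1 + j2 - j)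
      else 0)"

definition wl_mult :: "nat \<Rightarrow> 'k::field_char_0 wl \<Rightarrow> 'k wl \<Rightarrow> 'k wl" where
  "wl_mult l P Q = (\<lambda>c. \<Sum>a\<in>wl_supp_idx P. \<Sum>b\<in>wl_supp_idx Q. P a * Q b * basis_mul l a b c)"

definition wl_comm :: "nat \<Rightarrow> 'k::field_char_0 wl \<Rightarrow> 'k wl \<Rightarrow> 'k wl" where
  "wl_comm l P Q = (\<lambda>c. wl_mult l P Q c - wl_mult l Q P c)"

definition Supp :: "nat \<Rightarrow> 'k::zero wl \<Rightarrow> (rat \<times> rat) set" where
  "Supp l P = {(of_int i / of_nat l, of_nat j) | i j. P (i, j) \<noteq> 0}"

definition wdir :: "nat \<Rightarrow> 'k::zero wl \<Rightarrow> rat \<times> rat" where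
  "wdir l P = (THE p. p \<in> Supp l P
      \<and> (\<forall>q\<in>Supp l P. fst q - snd q \<le> fst p - snd p)
      \<and> (\<forall>q\<in>Supp l P. fst q - snd q = fst p - snd p \<longrightarrow> fst q \<le> fst p))"

definition wbar :: "nat \<Rightarrow> 'k::zero wl \<Rightarrow> rat \<times> rat" where
  "wbar l P = (THE p. p \<in> Supp l P
      \<and> (\<forall>q\<in>Supp l P. snd q - fst q \<le> snd p - fst p)
      \<and> (\<forall>q\<in>Supp l P. snd q - fst q = snd p - fst p \<longrightarrow> snd q \<le> snd p))"

definition aligned :: "rat \<times> rat \<Rightarrow> rat \<times> rat \<Rightarrow> bool" where
  "aligned a b \<longleftrightarrow> fst a * snd b - snd a * fst b = 0"

end

theory Submission
  imports Defs
begin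

text \<open>Give the monomial X^(i/l) Y^j the weight i - j l, which is l (a - b) at its point
(a, b) = (i/l, j). In the commutator of two monomials the top terms X^(\<alpha>+\<beta>) Y^(j1+j2) of
the two products cancel, and every surviving term has the weight of the product but a smaller
X-exponent; the next term X^(\<alpha>+\<beta>-1) Y^(j1+j2-1) has coefficient j1 \<beta> - j2 \<alpha>, the
determinant that non-alignment keeps nonzero. So the monomial of [P,Q] that is leading for
"weight first, then X-exponent" is the corner term coming from the leading monomials of P and
Q alone. Maximizing the weight gives w, minimizing it gives w-bar.\<close>

definition wl_weight :: "nat \<Rightarrow> int \<times> nat \<Rightarrow> int" where
  "wl_weight l k = fst k - int (snd k) * int l"

definition wl_point :: "nat \<Rightarrow> int \<times> nat \<Rightarrow> rat \<times> rat" where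
  "wl_point l k = (of_int (fst k) / of_nat l, of_nat (snd k))"

text \<open>With s = 1 this singles out the index of w, with s = -1 that of w-bar: on indices of
equal weight, i and j increase together.\<close>

definition wl_leading :: "int \<Rightarrow> nat \<Rightarrow> 'k::zero wl \<Rightarrow> int \<times> nat \<Rightarrow> bool" where
  "wl_leading s l P k \<longleftrightarrow> P k \<noteq> 0 \<and>
     (\<forall>k'. P k' \<noteq> 0 \<longrightarrow> s * wl_weight l k' \<le> s * wl_weight l k \<and>
        (wl_weight l k' = wl_weight l k \<longrightarrow> fst k' \<le> fst k))"

lemma wl_weight_eq_imp_snd_le_iff:
  assumes "l > 0" "wl_weight l k = wl_weight l k'"
  shows "snd k \<le> snd k' \<longleftrightarrow> fst k \<le> fst k'"
proof -
  have "fst k - fst k' = (int (snd k) - int (snd k')) * int l"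
    using assms(2) by (simp add: wl_weight_def algebra_simps)
  moreover have "(int (snd k) - int (snd k')) * int l \<le> 0 \<longleftrightarrow> int (snd k) - int (snd k') \<le> 0"
    using assms(1) by (simp add: mult_le_0_iff)
  ultimately show ?thesis by linarith
qed

lemma wl_weight_corner:
  assumes "snd p + snd q \<ge> 1"
  shows "wl_weight l (fst p + fst q - int l, snd p + snd q - 1) = wl_weight l p + wl_weight l q"
  using assms by (simp add: wl_weight_def of_nat_diff algebra_simps)

lemma basis_mul_nonzero_imp:
  assumes "basis_mul l a b c \<noteq> (0::'k::field_char_0)"
  shows "snd c \<le> snd a + snd b" "snd a + snd b - snd c \<le> snd a"
    "fst c = fst a + fst b - int ((snd a + snd b - snd c) * l)"
  using assms by (cases a; cases b; cases c; auto simp: basis_mul_def Let_def split: if_splits)+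

lemma basis_mul_top: "basis_mul l a b (fst a + fst b, snd a + snd b) = (1::'k::field_char_0)"
  by (cases a; cases b) (simp add: basis_mul_def ffact_wl_def)

lemma basis_mul_subtop:
  assumes "snd a + snd b \<ge> 1"
  shows "basis_mul l a b (fst a + fst b - int l, snd a + snd b - 1)
    = (of_nat (snd a) * (of_int (fst b) / of_nat l) :: 'k::field_char_0)"
  using assms by (cases a; cases b) (auto simp: basis_mul_def ffact_wl_def Let_def)

lemma basis_comm_nonzero_imp:
  assumes "basis_mul l a b c \<noteq> (basis_mul l b a c :: 'k::field_char_0)"
  shows "wl_weight l c = wl_weight l a + wl_weight l b" "fst c \<le> fst a + fst b - int l"
proof -
  define t where "t = snd a + snd b - snd c"
  have "basis_mul l a b c \<noteq> (0::'k) \<or> basis_mul l b a c \<noteq> (0::'k)"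
    using assms by auto
  then have h: "snd c \<le> snd a + snd b" "fst c = fst a + fst b - int t * int l"
    using basis_mul_nonzero_imp[of l a b c] basis_mul_nonzero_imp[of l b a c]
    by (auto simp: t_def add.commute)
  have "t \<noteq> 0"
  proof
    assume "t = 0"
    then have "c = (fst b + fst a, snd b + snd a)"
      using h by (simp add: t_def prod_eq_iff)
    then show False
      using assms basis_mul_top[of l a b, where 'k='k] basis_mul_top[of l b a, where 'k='k]
      by (simp add: add.commute)
  qed
  then have "int l \<le> int t * int l" by (simp add: mult_le_cancel_right1)
  with h(2) show "fst c \<le> fst a + fst b - int l" by linarith
  have "int t = int (snd a) + int (snd b) - int (snd c)"
    using h(1) by (simp add: t_def of_nat_diff)
  then show "wl_weight l c = wl_weight l a + wl_weight l b"
    unfolding wl_weight_def h(2) by (simp add: left_diff_distrib distrib_right)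
qed

lemma wl_comm_eq_sum:
  "wl_comm l P Q c = (\<Sum>a\<in>wl_supp_idx P. \<Sum>b\<in>wl_supp_idx Q.
      P a * Q b * (basis_mul l a b c - basis_mul l b a c))"
proof -
  have "wl_mult l Q P c = (\<Sum>a\<in>wl_supp_idx P. \<Sum>b\<in>wl_supp_idx Q. P a * Q b * basis_mul l b a c)"
    unfolding wl_mult_def by (subst sum.swap) (simp add: ac_simps)
  then show ?thesis
    by (simp add: wl_comm_def wl_mult_def sum_subtractf right_diff_distrib)
qed

lemma wl_leading_exists:
  fixes P :: "'k::zero wl"
  assumes "wl_elem P" and "P \<noteq> (\<lambda>_. 0)"
  obtains k where "wl_leading s l P k"
proof -
  define S where "S = {k. P k \<noteq> 0}"
  have "finite S" "S \<noteq> {}" using assms by (auto simp: S_def wl_elem_def)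
  define m where "m = Max ((\<lambda>k. s * wl_weight l k) ` S)"
  define T where "T = {k\<in>S. s * wl_weight l k = m}"
  have "m \<in> (\<lambda>k. s * wl_weight l k) ` S"
    unfolding m_def using \<open>finite S\<close> \<open>S \<noteq> {}\<close> by (intro Max_in) auto
  then have "finite T" "T \<noteq> {}" using \<open>finite S\<close> by (auto simp: T_def)
  then have "Max (fst ` T) \<in> fst ` T" by (intro Max_in) auto
  then obtain k where k: "k \<in> T" "fst k = Max (fst ` T)" by auto
  have "wl_leading s l P k"
    unfolding wl_leading_def
  proof (intro conjI allI impI)
    show "P k \<noteq> 0" using k by (simp add: T_def S_def)
    fix k' assume "P k' \<noteq> 0"
    then have "k' \<in> S" by (simp add: S_def)
    then have "s * wl_weight l k' \<le> m"
      unfolding m_def using \<open>finite S\<close> by (intro Max_ge) auto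
    then show "s * wl_weight l k' \<le> s * wl_weight l k"
      using k by (simp add: T_def)
    assume "wl_weight l k' = wl_weight l k"
    with \<open>k' \<in> S\<close> k have "k' \<in> T" by (simp add: T_def)
    then show "fst k' \<le> fst k" using k \<open>finite T\<close> by simp
  qed
  then show thesis by (rule that)
qed

lemma wl_comm_nonzero_imp:
  fixes P Q :: "'k::field_char_0 wl"
  assumes "wl_comm l P Q c \<noteq> 0"
  obtains a b where "P a \<noteq> 0" "Q b \<noteq> 0" "basis_mul l a b c \<noteq> (basis_mul l b a c :: 'k)"
proof -
  obtain a where "a \<in> wl_supp_idx P"
    and "(\<Sum>b\<in>wl_supp_idx Q. P a * Q b * (basis_mul l a b c - basis_mul l b a c)) \<noteq> 0"
    using assms unfolding wl_comm_eq_sum by (rule sum.not_neutral_contains_not_neutral)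
  moreover from this(2) obtain b where "b \<in> wl_supp_idx Q"
    and "P a * Q b * (basis_mul l a b c - basis_mul l b a c) \<noteq> 0"
    by (rule sum.not_neutral_contains_not_neutral)
  ultimately show thesis by (intro that) auto
qed

lemma wl_leading_term_bound:
  fixes P Q :: "'k::field_char_0 wl"
  assumes "s \<noteq> 0" "l > 0"
    and p: "wl_leading s l P p" and q: "wl_leading s l Q q"
    and "P a \<noteq> 0" "Q b \<noteq> 0" and D: "basis_mul l a b c \<noteq> (basis_mul l b a c :: 'k)"
  shows "s * wl_weight l c \<le> s * (wl_weight l p + wl_weight l q)"
    and "wl_weight l c = wl_weight l p + wl_weight l q \<Longrightarrow>
      fst c \<le> fst p + fst q - int l \<and> (fst c = fst p + fst q - int l \<longrightarrow> a = p \<and> b = q)"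
proof -
  note c = basis_comm_nonzero_imp[OF D]
  have a: "s * wl_weight l a \<le> s * wl_weight l p" "wl_weight l a = wl_weight l p \<Longrightarrow> fst a \<le> fst p"
    using p \<open>P a \<noteq> 0\<close> unfolding wl_leading_def by blast+
  have b: "s * wl_weight l b \<le> s * wl_weight l q" "wl_weight l b = wl_weight l q \<Longrightarrow> fst b \<le> fst q"
    using q \<open>Q b \<noteq> 0\<close> unfolding wl_leading_def by blast+
  show "s * wl_weight l c \<le> s * (wl_weight l p + wl_weight l q)"
    using a(1) b(1) c(1) by (simp add: distrib_left)
  assume "wl_weight l c = wl_weight l p + wl_weight l q"
  then have "s * wl_weight l a + s * wl_weight l b = s * wl_weight l p + s * wl_weight l q"
    using c(1) by (metis distrib_left)
  then have "s * wl_weight l a = s * wl_weight l p" "s * wl_weight l b = s * wl_weight l q"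
    using a(1) b(1) by linarith+
  then have wa: "wl_weight l a = wl_weight l p" and wb: "wl_weight l b = wl_weight l q"
    using \<open>s \<noteq> 0\<close> by simp_all
  then have "fst a \<le> fst p" "fst b \<le> fst q" using a(2) b(2) by auto
  moreover have "a = p" "b = q" if "fst c = fst p + fst q - int l"
  proof -
    have "fst a = fst p" "fst b = fst q" using that c(2) \<open>fst a \<le> fst p\<close> \<open>fst b \<le> fst q\<close> by linarith+
    then show "a = p" "b = q"
      using wl_weight_eq_imp_snd_le_iff[OF \<open>l > 0\<close> wa] wl_weight_eq_imp_snd_le_iff[OF \<open>l > 0\<close> wb]
        wl_weight_eq_imp_snd_le_iff[OF \<open>l > 0\<close> wa[symmetric]]
        wl_weight_eq_imp_snd_le_iff[OF \<open>l > 0\<close> wb[symmetric]]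
      by (simp_all add: prod_eq_iff)
  qed
  ultimately show "fst c \<le> fst p + fst q - int l \<and> (fst c = fst p + fst q - int l \<longrightarrow> a = p \<and> b = q)"
    using c(2) by auto
qed

lemma wl_comm_at_corner:
  fixes P Q :: "'k::field_char_0 wl"
  assumes "s \<noteq> 0" "l > 0" "wl_elem P" "wl_elem Q"
    and p: "wl_leading s l P p" and q: "wl_leading s l Q q" and "snd p + snd q \<ge> 1"
  shows "wl_comm l P Q (fst p + fst q - int l, snd p + snd q - 1)
    = P p * Q q * (of_int (int (snd p) * fst q - int (snd q) * fst p) / of_nat l)"
proof -
  define c0 where "c0 = (fst p + fst q - int l, snd p + snd q - 1)"
  define X where "X = P p * Q q * (basis_mul l p q c0 - basis_mul l q p c0)"
  have "wl_weight l c0 = wl_weight l p + wl_weight l q"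
    unfolding c0_def using \<open>snd p + snd q \<ge> 1\<close> by (rule wl_weight_corner)
  then have "P a * Q b * (basis_mul l a b c0 - basis_mul l b a c0)
      = (if b = q then if a = p then X else 0 else 0)" for a b
    using wl_leading_term_bound(2)[OF assms(1,2) p q, of a b c0]
    by (cases "P a = 0 \<or> Q b = 0 \<or> basis_mul l a b c0 = basis_mul l b a c0") (auto simp: X_def c0_def)
  moreover have "p \<in> wl_supp_idx P" "q \<in> wl_supp_idx Q" "finite (wl_supp_idx P)" "finite (wl_supp_idx Q)"
    using p q assms(3,4) by (auto simp: wl_leading_def wl_supp_idx_def wl_elem_def)
  ultimately have "wl_comm l P Q c0 = X"
    unfolding wl_comm_eq_sum by simp
  also have "X = P p * Q q * (of_int (int (snd p) * fst q - int (snd q) * fst p) / of_nat l)"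
    using basis_mul_subtop[of p q l, where 'k='k] basis_mul_subtop[of q p l, where 'k='k] \<open>snd p + snd q \<ge> 1\<close>
    by (simp add: X_def c0_def add.commute diff_divide_distrib mult.commute)
  finally show ?thesis by (simp add: c0_def)
qed

lemma wl_comm_leading:
  fixes P Q :: "'k::field_char_0 wl"
  assumes "s \<noteq> 0" "l > 0" "wl_elem P" "wl_elem Q"
    and p: "wl_leading s l P p" and q: "wl_leading s l Q q"
    and det: "int (snd p) * fst q \<noteq> int (snd q) * fst p"
  shows "snd p + snd q \<ge> 1"
    and "wl_leading s l (wl_comm l P Q) (fst p + fst q - int l, snd p + snd q - 1)"
proof -
  show "snd p + snd q \<ge> 1" using det by (cases "snd p + snd q = 0") auto
  note corner = wl_comm_at_corner[OF assms(1-4) p q this]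
  have "P p \<noteq> 0" "Q q \<noteq> 0" using p q by (simp_all add: wl_leading_def)
  moreover have "(of_int (int (snd p) * fst q - int (snd q) * fst p) :: 'k) \<noteq> 0"
    using det by (subst of_int_eq_0_iff) simp
  ultimately have "wl_comm l P Q (fst p + fst q - int l, snd p + snd q - 1) \<noteq> 0"
    unfolding corner using \<open>l > 0\<close> by (simp del: of_int_diff of_int_mult)
  moreover have "s * wl_weight l c \<le> s * (wl_weight l p + wl_weight l q) \<and>
      (wl_weight l c = wl_weight l p + wl_weight l q \<longrightarrow> fst c \<le> fst p + fst q - int l)"
    if "wl_comm l P Q c \<noteq> 0" for c
    using that by (rule wl_comm_nonzero_imp) (use wl_leading_term_bound[OF assms(1,2) p q] in blast)
  ultimately show "wl_leading s l (wl_comm l P Q) (fst p + fst q - int l, snd p + snd q - 1)"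
    unfolding wl_leading_def wl_weight_corner[OF \<open>snd p + snd q \<ge> 1\<close>] by auto
qed

lemma Supp_eq_image: "Supp l P = wl_point l ` {k. P k \<noteq> 0}"
  unfolding Supp_def wl_point_def by (auto simp: image_iff)

lemma the_lex_max_eq:
  fixes f g :: "'a \<Rightarrow> 'b::linorder"
  assumes "p \<in> S" "\<forall>q\<in>S. f q \<le> f p" "\<forall>q\<in>S. f q = f p \<longrightarrow> g q \<le> g p"
    and "\<forall>q\<in>S. f q = f p \<and> g q = g p \<longrightarrow> q = p"
  shows "(THE p. p \<in> S \<and> (\<forall>q\<in>S. f q \<le> f p) \<and> (\<forall>q\<in>S. f q = f p \<longrightarrow> g q \<le> g p)) = p"
proof (rule the_equality)
  fix p' assume p': "p' \<in> S \<and> (\<forall>q\<in>S. f q \<le> f p') \<and> (\<forall>q\<in>S. f q = f p' \<longrightarrow> g q \<le> g p')"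
  with assms(1,2) have "f p' = f p" by (meson antisym)
  with p' assms(1,3) have "g p' = g p" by (metis antisym)
  with p' \<open>f p' = f p\<close> assms(4) show "p' = p" by blast
qed (use assms in blast)

lemma wl_point_diff:
  assumes "l > 0"
  shows "fst (wl_point l k) - snd (wl_point l k) = of_int (wl_weight l k) / of_nat l"
    and "snd (wl_point l k) - fst (wl_point l k) = of_int (- wl_weight l k) / of_nat l"
  using assms by (simp_all add: wl_point_def wl_weight_def field_simps)

lemma wl_point_fst_le_iff:
  assumes "l > 0"
  shows "fst (wl_point l k) \<le> fst (wl_point l k') \<longleftrightarrow> fst k \<le> fst k'"
  using assms by (simp add: wl_point_def divide_le_cancel)

lemma wdir_eq_wl_point:
  assumes "l > 0" and k: "wl_leading 1 l P k"
  shows "wdir l P = wl_point l k"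
  unfolding wdir_def
proof (rule the_lex_max_eq[where f = "\<lambda>q. fst q - snd q" and g = fst])
  show "\<forall>q\<in>Supp l P. fst q - snd q = fst (wl_point l k) - snd (wl_point l k)
      \<and> fst q = fst (wl_point l k) \<longrightarrow> q = wl_point l k"
    by (simp add: prod_eq_iff)
qed (use k \<open>l > 0\<close> in
    \<open>auto simp: Supp_eq_image wl_leading_def wl_point_diff divide_le_cancel wl_point_fst_le_iff\<close>)

lemma wbar_eq_wl_point:
  assumes "l > 0" and k: "wl_leading (-1) l P k"
  shows "wbar l P = wl_point l k"
  unfolding wbar_def
proof (rule the_lex_max_eq[where f = "\<lambda>q. snd q - fst q" and g = snd])
  show "\<forall>q\<in>Supp l P. snd q - fst q = snd (wl_point l k) - fst (wl_point l k)
      \<and> snd q = snd (wl_point l k) \<longrightarrow> q = wl_point l k"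
    by (simp add: prod_eq_iff)
  have "snd k' \<le> snd k" if "P k' \<noteq> 0" "wl_weight l k' = wl_weight l k" for k'
  proof -
    have "fst k' \<le> fst k" using k that unfolding wl_leading_def by blast
    with wl_weight_eq_imp_snd_le_iff[OF \<open>l > 0\<close> that(2)] show ?thesis by simp
  qed
  then show "\<forall>q\<in>Supp l P. snd q - fst q = snd (wl_point l k) - fst (wl_point l k)
      \<longrightarrow> snd q \<le> snd (wl_point l k)"
    using \<open>l > 0\<close> by (auto simp: Supp_eq_image wl_point_diff) (auto simp: wl_point_def)
qed (use k \<open>l > 0\<close> in \<open>auto simp: Supp_eq_image wl_leading_def wl_point_diff divide_le_cancel\<close>)

lemma aligned_wl_point_iff:
  assumes "l > 0"
  shows "aligned (wl_point l p) (wl_point l q) \<longleftrightarrow> int (snd p) * fst q = int (snd q) * fst p"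
proof -
  have "fst (wl_point l p) * snd (wl_point l q) - snd (wl_point l p) * fst (wl_point l q)
      = of_int (fst p * int (snd q) - int (snd p) * fst q) / of_nat l"
    by (simp add: wl_point_def diff_divide_distrib)
  then have "aligned (wl_point l p) (wl_point l q)
      \<longleftrightarrow> fst p * int (snd q) - int (snd p) * fst q = 0"
    unfolding aligned_def using assms by (simp only: divide_eq_0_iff of_int_eq_0_iff) simp
  then show ?thesis by (auto simp: algebra_simps)
qed

lemma wl_point_corner:
  assumes "l > 0" "snd p + snd q \<ge> 1"
  shows "wl_point l (fst p + fst q - int l, snd p + snd q - 1)
    = (fst (wl_point l p) + fst (wl_point l q) - 1, snd (wl_point l p) + snd (wl_point l q) - 1)"
  using assms by (simp add: wl_point_def of_nat_diff field_simps)

lemma wl_comm_leading_point: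
  fixes P Q :: "'k::field_char_0 wl"
  assumes "s \<noteq> 0" "l > 0" "wl_elem P" "wl_elem Q"
    and p: "wl_leading s l P p" and q: "wl_leading s l Q q"
    and "\<not> aligned (wl_point l p) (wl_point l q)"
  obtains c where "wl_leading s l (wl_comm l P Q) c"
    and "wl_point l c = (fst (wl_point l p) + fst (wl_point l q) - 1,
                         snd (wl_point l p) + snd (wl_point l q) - 1)"
proof -
  have det: "int (snd p) * fst q \<noteq> int (snd q) * fst p"
    using assms(7) aligned_wl_point_iff[OF \<open>l > 0\<close>] by blast
  show thesis
    using that wl_comm_leading[OF assms(1-4) p q det] wl_point_corner[OF \<open>l > 0\<close>] by blast
qed

theorem proposition1p10:
  fixes l :: nat and P Q :: "'k::field_char_0 wl"
  assumes "l > 0"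
    and "wl_elem P" and "wl_elem Q"
    and "P \<noteq> (\<lambda>_. 0)" and "Q \<noteq> (\<lambda>_. 0)"
  shows "(\<not> aligned (wdir l P) (wdir l Q) \<longrightarrow>
           wl_comm l P Q \<noteq> (\<lambda>_. 0) \<and>
           wdir l (wl_comm l P Q) = (fst (wdir l P) + fst (wdir l Q) - 1,
                                      snd (wdir l P) + snd (wdir l Q) - 1))
       \<and> (\<not> aligned (wbar l P) (wbar l Q) \<longrightarrow>
           wl_comm l P Q \<noteq> (\<lambda>_. 0) \<and>
           wbar l (wl_comm l P Q) = (fst (wbar l P) + fst (wbar l Q) - 1,
                                      snd (wbar l P) + snd (wbar l Q) - 1))"
proof -
  have nonzero: "R \<noteq> (\<lambda>_. 0)" if "wl_leading s l R c" for s and R :: "'k wl" and c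
    using that by (auto simp: wl_leading_def)
  obtain p q where p: "wl_leading 1 l P p" and q: "wl_leading 1 l Q q"
    using wl_leading_exists assms(2-5) by metis
  obtain p' q' where p': "wl_leading (-1) l P p'" and q': "wl_leading (-1) l Q q'"
    using wl_leading_exists assms(2-5) by metis
  note wdir = wdir_eq_wl_point[OF \<open>l > 0\<close>] and wbar = wbar_eq_wl_point[OF \<open>l > 0\<close>]
  show ?thesis
  proof (intro conjI impI)
    assume "\<not> aligned (wdir l P) (wdir l Q)"
    then obtain c where c: "wl_leading 1 l (wl_comm l P Q) c"
      and "wl_point l c = (fst (wdir l P) + fst (wdir l Q) - 1, snd (wdir l P) + snd (wdir l Q) - 1)"
      using wl_comm_leading_point[OF _ assms(1-3) p q] by (auto simp: wdir[OF p] wdir[OF q])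
    then show "wl_comm l P Q \<noteq> (\<lambda>_. 0)"
      and "wdir l (wl_comm l P Q) = (fst (wdir l P) + fst (wdir l Q) - 1, snd (wdir l P) + snd (wdir l Q) - 1)"
      using nonzero[OF c] wdir[OF c] by auto
  next
    assume "\<not> aligned (wbar l P) (wbar l Q)"
    then obtain c where c: "wl_leading (-1) l (wl_comm l P Q) c"
      and "wl_point l c = (fst (wbar l P) + fst (wbar l Q) - 1, snd (wbar l P) + snd (wbar l Q) - 1)"
      using wl_comm_leading_point[OF _ assms(1-3) p' q'] by (auto simp: wbar[OF p'] wbar[OF q'])
    then show "wl_comm l P Q \<noteq> (\<lambda>_. 0)"
      and "wbar l (wl_comm l P Q) = (fst (wbar l P) + fst (wbar l Q) - 1, snd (wbar l P) + snd (wbar l Q) - 1)"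
      using nonzero[OF c] wbar[OF c] by auto
  qed
qed

end
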